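(* Let $\Gamma$ be a countable discrete group acting on a $\sigma$-finite measure space $(\mathcal X,\mu)$ by a quasi-$\Gamma$-invariant measurable action $\sigma$ with Jacobian $J_\sigma$, and let $\Pi_\sigma$ be the unitary representation $\Pi_\sigma(\gamma)\varphi(x)=J_\sigma(\gamma^{-1},x)^{1/2}\varphi(\sigma_{\gamma^{-1}}(x))$ on $L^2(\mathcal X,\mu)$. Suppose $\sigma$ has the tiling property with tiling set $C$. Then the Zak transform $Z_\sigma$, restricted to $x\in C$, defines an isometric isomorphism $Z_\sigma:L^2(\mathcal X,\mu)\to L^2((C,\mu),L^2(\mathcal{R}(\Gamma)))$ satisfying $Z_\sigma[\Pi_\sigma(\gamma)\varphi]=Z_\sigma[\varphi]\rho(\gamma)^*$ for all $\gamma\in\Gamma$, $\varphi\in L^2(\mathcal X,\mu)$. Hence $Z_\sigma$ is a Helson map for $\Pi_\sigma$, and the bracket map of $\Pi_\sigma$ is $[\varphi,\psi]=\int_C Z_\sigma[\psi](x)^*Z_\sigma[\varphi](x)\,d\mu(x)$.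
   Context: $\rho(\gamma)\delta_{\gamma'}=\delta_{\gamma'\gamma^{-1}}$ on $\ell_2(\Gamma)$; $\mathcal{R}(\Gamma)$ is the weak-operator-topology closure of $\mathrm{span}\{\rho(\gamma)\}$, trace $\tau(F)=\langle F\delta_{\mathrm e},\delta_{\mathrm e}\rangle$; $L^p(\mathcal{R}(\Gamma))$ the completion of $\mathrm{span}\{\rho(\gamma)\}$ in $\tau(|F|^p)^{1/p}$. A quasi-$\Gamma$-invariant measurable action: $x\mapsto\sigma_\gamma(x)$ is measurable for each $\gamma$, $\sigma_\gamma\sigma_{\gamma'}=\sigma_{\gamma\gamma'}$ and $\sigma_{\mathrm e}=\mathrm{id}$ a.e., and each measure $E\mapsto\mu(\sigma_\gamma(E))$ is absolutely continuous w.r.t. $\mu$ with positive density $J_\sigma(\gamma,\cdot)$, i.e. $d\mu(\sigma_\gamma(x))=J_\sigma(\gamma,x)d\mu(x)$. Tiling property: there is a measurable $C\subset\mathcal X$ with $\mu(\sigma_{\gamma_1}(C)\cap\sigma_{\gamma_2}(C))=0$ for $\gamma_1\ne\gamma_2$ and $\mu(\mathcal X\setminus\bigcup_\gamma\sigma_\gamma(C))=0$. Zak transform: $Z_\sigma[\varphi](x)=\sum_{\gamma\in\Gamma}(\Pi_\sigma(\gamma)\varphi)(x)\rho(\gamma)$. A Helson map for $(\Gamma,\Pi,\mathcal{H})$ is an isometry $\mathscr T:\mathcal{H}\to L^2((\mathcal{M},\nu),L^2(\mathcal{R}(\Gamma)))$ with $\mathscr T[\Pi(\gamma)\varphi]=\mathscr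 T[\varphi]\rho(\gamma)^*$; the bracket map is the sesquilinear $[\cdot,\cdot]:\mathcal{H}\times\mathcal{H}\to L^1(\mathcal{R}(\Gamma))$ with $\langle\varphi,\Pi(\gamma)\psi\rangle=\tau([\varphi,\psi]\rho(\gamma))$. *)

theory Defs
  imports "HOL-Analysis.Analysis" "HOL-Probability.Probability"
begin

text \<open>Group \<Gamma>: a type of class group_add (not necessarily commutative), written additively:
  group product = +, identity e = 0, inverse = unary minus. Countable discrete: class countable.

  Model of L^2(R(\<Gamma>)): an element F = \<Sum> c(g) rho(g) is represented by its coefficient
  function c :: 'g \<Rightarrow> complex (noncommutative Plancherel), with tau(|F|^2) = \<Sum>|c g|^2.\<close>

definition l2_norm2 :: "('g \<Rightarrow> complex) \<Rightarrow> real" where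
  "l2_norm2 c = (\<Sum>\<^sub>\<infinity> g. (cmod (c g))^2)"

definition in_l2 :: "('g \<Rightarrow> complex) \<Rightarrow> bool" where
  "in_l2 c \<longleftrightarrow> (\<lambda>g. (cmod (c g))^2) summable_on UNIV"

text \<open>F rho(gamma)^*: coefficient at zeta is c(zeta + gamma)\<close>
definition rho_adj_right :: "('g::group_add \<Rightarrow> complex) \<Rightarrow> 'g \<Rightarrow> ('g \<Rightarrow> complex)" where
  "rho_adj_right c \<gamma> = (\<lambda>\<zeta>. c (\<zeta> + \<gamma>))"

text \<open>Coefficients of G^* F (an element of L^1(R(Gamma))).\<close>
definition nc_adj_mult :: "('g::group_add \<Rightarrow> complex) \<Rightarrow> ('g \<Rightarrow> complex) \<Rightarrow> ('g \<Rightarrow> complex)" where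
  "nc_adj_mult G F = (\<lambda>\<alpha>. \<Sum>\<^sub>\<infinity> \<eta>. cnj (G \<eta>) * F (\<eta> + \<alpha>))"

text \<open>tau(F rho(gamma)) for F with coefficient function b\<close>
definition tau_rho :: "('g::group_add \<Rightarrow> complex) \<Rightarrow> 'g \<Rightarrow> complex" where
  "tau_rho b \<gamma> = b (- \<gamma>)"

definition L2_fun :: "'x measure \<Rightarrow> ('x \<Rightarrow> complex) \<Rightarrow> bool" where
  "L2_fun M \<phi> \<longleftrightarrow> \<phi> \<in> borel_measurable M \<and> integrable M (\<lambda>x. (cmod (\<phi> x))^2)"

definition L2_inner :: "'x measure \<Rightarrow> ('x \<Rightarrow> complex) \<Rightarrow> ('x \<Rightarrow> complex) \<Rightarrow> complex" where
  "L2_inner M \<phi> \<psi> = (\<integral>x. \<phi> x * cnj (\<psi> x) \<partial>M)"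

text \<open>Elements of L^2((N), L^2(R(Gamma))) (Gamma countable, so weak = strong measurability).\<close>
definition L2_vec :: "'x measure \<Rightarrow> ('x \<Rightarrow> 'g \<Rightarrow> complex) \<Rightarrow> bool" where
  "L2_vec N F \<longleftrightarrow> (\<forall>g. (\<lambda>x. F x g) \<in> borel_measurable N) \<and> (AE x in N. in_l2 (F x))
     \<and> integrable N (\<lambda>x. l2_norm2 (F x))"

definition quasi_invariant_action ::
  "'x measure \<Rightarrow> ('g::group_add \<Rightarrow> 'x \<Rightarrow> 'x) \<Rightarrow> ('g \<Rightarrow> 'x \<Rightarrow> real) \<Rightarrow> bool" where
  "quasi_invariant_action M \<sigma> J \<longleftrightarrow>
     (\<forall>\<gamma>. \<sigma> \<gamma> \<in> M \<rightarrow>\<^sub>M M) \<and>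
     (\<forall>\<gamma> \<gamma>'. AE x in M. \<sigma> (\<gamma> + \<gamma>') x = \<sigma> \<gamma> (\<sigma> \<gamma>' x)) \<and>
     (AE x in M. \<sigma> 0 x = x) \<and>
     (\<forall>\<gamma>. J \<gamma> \<in> borel_measurable M \<and> (AE x in M. J \<gamma> x > 0) \<and>
        (\<forall>E\<in>sets M. emeasure M (\<sigma> (-\<gamma>) -` E \<inter> space M) = (\<integral>\<^sup>+ x\<in>E. ennreal (J \<gamma> x) \<partial>M)))"

text \<open>sigma_gamma(C) represented (a.e.) as the preimage of C under sigma_{gamma^-1}.\<close>
definition tile :: "'x measure \<Rightarrow> ('g::group_add \<Rightarrow> 'x \<Rightarrow> 'x) \<Rightarrow> 'x set \<Rightarrow> 'g \<Rightarrow> 'x set" where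
  "tile M \<sigma> C \<gamma> = \<sigma> (-\<gamma>) -` C \<inter> space M"

definition tiling_set :: "'x measure \<Rightarrow> ('g::group_add \<Rightarrow> 'x \<Rightarrow> 'x) \<Rightarrow> 'x set \<Rightarrow> bool" where
  "tiling_set M \<sigma> C \<longleftrightarrow> C \<in> sets M \<and>
     (\<forall>\<gamma>1 \<gamma>2. \<gamma>1 \<noteq> \<gamma>2 \<longrightarrow> emeasure M (tile M \<sigma> C \<gamma>1 \<inter> tile M \<sigma> C \<gamma>2) = 0) \<and>
     emeasure M (space M - (\<Union>\<gamma>. tile M \<sigma> C \<gamma>)) = 0"

definition Pi_sigma :: "('g::group_add \<Rightarrow> 'x \<Rightarrow> 'x) \<Rightarrow> ('g \<Rightarrow> 'x \<Rightarrow> real) \<Rightarrow> 'g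
    \<Rightarrow> ('x \<Rightarrow> complex) \<Rightarrow> ('x \<Rightarrow> complex)" where
  "Pi_sigma \<sigma> J \<gamma> \<phi> = (\<lambda>x. complex_of_real (sqrt (J (-\<gamma>) x)) * \<phi> (\<sigma> (-\<gamma>) x))"

text \<open>Zak transform: Z[phi](x) = \<Sum>_gamma (Pi(gamma) phi)(x) rho(gamma), as coefficient function.\<close>
definition zak :: "('g::group_add \<Rightarrow> 'x \<Rightarrow> 'x) \<Rightarrow> ('g \<Rightarrow> 'x \<Rightarrow> real) \<Rightarrow> ('x \<Rightarrow> complex)
    \<Rightarrow> 'x \<Rightarrow> ('g \<Rightarrow> complex)" where
  "zak \<sigma> J \<phi> = (\<lambda>x \<gamma>. Pi_sigma \<sigma> J \<gamma> \<phi> x)"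

definition helson_map :: "'x measure \<Rightarrow> ('g::group_add \<Rightarrow> ('x \<Rightarrow> complex) \<Rightarrow> ('x \<Rightarrow> complex))
    \<Rightarrow> 'y measure \<Rightarrow> (('x \<Rightarrow> complex) \<Rightarrow> 'y \<Rightarrow> ('g \<Rightarrow> complex)) \<Rightarrow> bool" where
  "helson_map M Rep N T \<longleftrightarrow>
     (\<forall>\<phi>. L2_fun M \<phi> \<longrightarrow> L2_vec N (T \<phi>) \<and>
        (\<integral>y. l2_norm2 (T \<phi> y) \<partial>N) = (\<integral>x. (cmod (\<phi> x))^2 \<partial>M) \<and>
        (\<forall>\<gamma>. AE y in N. T (Rep \<gamma> \<phi>) y = rho_adj_right (T \<phi> y) \<gamma>)) \<and>
     (\<forall>\<phi> \<psi> a b. L2_fun M \<phi> \<longrightarrow> L2_fun M \<psi> \<longrightarrow>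
        (AE y in N. T (\<lambda>x. a * \<phi> x + b * \<psi> x) y = (\<lambda>g. a * T \<phi> y g + b * T \<psi> y g)))"

definition is_bracket_map :: "'x measure \<Rightarrow> ('g::group_add \<Rightarrow> ('x \<Rightarrow> complex) \<Rightarrow> ('x \<Rightarrow> complex))
    \<Rightarrow> (('x \<Rightarrow> complex) \<Rightarrow> ('x \<Rightarrow> complex) \<Rightarrow> ('g \<Rightarrow> complex)) \<Rightarrow> bool" where
  "is_bracket_map M Rep B \<longleftrightarrow>
     (\<forall>\<phi> \<psi> \<gamma>. L2_fun M \<phi> \<longrightarrow> L2_fun M \<psi> \<longrightarrow>
        L2_inner M \<phi> (Rep \<gamma> \<psi>) = tau_rho (B \<phi> \<psi>) \<gamma>)"

end

theory Submission
  imports Defs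
begin

text \<open>Because the translates of the tiling set \<open>C\<close> cover \<open>\<X>\<close> up to null sets and overlap
  only in null sets, every integral over \<open>\<X>\<close> can be folded onto \<open>C\<close>:
  \<open>\<integral>\<^sub>\<X> H = \<integral>\<^sub>C \<Sum>\<^sub>\<gamma> J(-\<gamma>, x) H(\<sigma>\<^sub>-\<^sub>\<gamma> x) d\<mu>(x)\<close>.
  For \<open>H = |\<phi>|\<^sup>2\<close> this says that the Zak transform is an isometry, and for
  \<open>H = \<phi> \<Pi>(\<gamma>)\<psi>\<^sup>*\<close> it gives the bracket formula. The intertwining relation is the cocycle identity
  of the Jacobian, and the inverse transform is
  \<open>\<phi>(y) = F(\<sigma>\<^sub>\<delta> y)(\<delta>) / J(-\<delta>, \<sigma>\<^sub>\<delta> y)\<^sup>1\<^sup>/\<^sup>2\<close>, where \<open>\<delta>\<close> is the unique index with \<open>\<sigma>\<^sub>\<delta> y \<in> C\<close>.\<close>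

lemma measurable_uncurry_countable:
  fixes f :: "'a \<Rightarrow> 'i::countable \<Rightarrow> 'b"
  assumes "\<And>i. (\<lambda>x. f x i) \<in> M \<rightarrow>\<^sub>M N"
  shows "(\<lambda>p. f (fst p) (snd p)) \<in> M \<Otimes>\<^sub>M count_space UNIV \<rightarrow>\<^sub>M N"
  by (rule measurable_compose_countable[where f="\<lambda>i p. f (fst p) i" and g=snd])
     (auto intro: measurable_compose[OF measurable_fst assms])

lemma borel_measurable_nn_integral_count_space:
  fixes f :: "'a \<Rightarrow> 'i::countable \<Rightarrow> ennreal"
  assumes "\<And>i. (\<lambda>x. f x i) \<in> borel_measurable M"
  shows "(\<lambda>x. \<integral>\<^sup>+i. f x i \<partial>count_space UNIV) \<in> borel_measurable M"
proof -
  interpret sigma_finite_measure "count_space (UNIV::'i set)"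
    by (rule sigma_finite_measure_count_space_countable) simp
  show ?thesis
    using measurable_uncurry_countable[of f, OF assms]
    by (intro borel_measurable_nn_integral) (simp add: case_prod_beta)
qed

lemma borel_measurable_integral_count_space:
  fixes f :: "'a \<Rightarrow> 'i::countable \<Rightarrow> 'b::{banach,second_countable_topology}"
  assumes "\<And>i. (\<lambda>x. f x i) \<in> borel_measurable M"
  shows "(\<lambda>x. \<integral>i. f x i \<partial>count_space UNIV) \<in> borel_measurable M"
proof -
  interpret sigma_finite_measure "count_space (UNIV::'i set)"
    by (rule sigma_finite_measure_count_space_countable) simp
  show ?thesis
    using measurable_uncurry_countable[of f, OF assms]
    by (intro borel_measurable_lebesgue_integral) (simp add: case_prod_beta)
qed

lemma integrable_count_space_iff_summable_norm:
  fixes f :: "'a \<Rightarrow> 'b::{banach,second_countable_topology}"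
  shows "integrable (count_space A) f \<longleftrightarrow> (\<lambda>x. norm (f x)) summable_on A"
  using abs_summable_equivalent[of f A] unfolding Infinite_Set_Sum.abs_summable_on_def ..

lemma integral_count_space_eq_infsum:
  fixes f :: "'a \<Rightarrow> 'b::{banach,second_countable_topology}"
  assumes "integrable (count_space A) f"
  shows "integral\<^sup>L (count_space A) f = infsum f A"
  using infsetsum_infsum[of f A] assms
  unfolding Infinite_Set_Sum.abs_summable_on_def infsetsum_def by simp

lemma summable_on_iff_nn_integral_finite:
  fixes f :: "'a \<Rightarrow> real"
  assumes "\<And>x. 0 \<le> f x"
  shows "f summable_on A \<longleftrightarrow> (\<integral>\<^sup>+x. f x \<partial>count_space A) < \<infinity>"
  using integrable_count_space_iff_summable_norm[of A f] assms
  by (simp add: integrable_iff_bounded)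

lemma infsum_eq_enn2real_nn_integral:
  fixes f :: "'a \<Rightarrow> real"
  assumes nonneg: "\<And>x. 0 \<le> f x"
  shows "infsum f A = enn2real (\<integral>\<^sup>+x. f x \<partial>count_space A)"
proof (cases "integrable (count_space A) f")
  case True
  then show ?thesis
    by (simp add: integral_count_space_eq_infsum[symmetric] integral_eq_nn_integral nonneg)
next
  case False
  then show ?thesis
    using integrable_count_space_iff_summable_norm[of A f] nonneg
    by (simp add: infsum_not_exists integrable_iff_bounded less_top[symmetric])
qed

lemma borel_measurable_infsum_countable:
  fixes f :: "'a \<Rightarrow> 'i::countable \<Rightarrow> complex"
  assumes [measurable]: "\<And>i. (\<lambda>x. f x i) \<in> borel_measurable M"
  shows "(\<lambda>x. infsum (f x) UNIV) \<in> borel_measurable M"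
proof -
  have "infsum (f x) UNIV = (if (\<integral>\<^sup>+i. norm (f x i) \<partial>count_space UNIV) < \<infinity>
      then \<integral>i. f x i \<partial>count_space UNIV else 0)" for x
    using integrable_count_space_iff_summable_norm[of UNIV "f x"]
      summable_on_iff_abs_summable_on_complex[of "f x" UNIV]
    by (auto simp: integrable_iff_bounded integral_count_space_eq_infsum infsum_not_exists)
  moreover have "(\<lambda>x. \<integral>\<^sup>+i. norm (f x i) \<partial>count_space UNIV) \<in> borel_measurable M"
    by (rule borel_measurable_nn_integral_count_space) measurable
  moreover have "(\<lambda>x. \<integral>i. f x i \<partial>count_space UNIV) \<in> borel_measurable M"
    by (rule borel_measurable_integral_count_space) measurable
  ultimately show ?thesis
    by simp measurable
qed

lemma nn_integral_count_space_if_unique: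
  assumes "\<exists>!i. P i"
  shows "(\<integral>\<^sup>+i. (if P i then c else 0) \<partial>count_space UNIV) = c"
proof -
  obtain i0 where i0: "P i0" "\<And>i. P i \<Longrightarrow> i = i0"
    using assms by blast
  have "(\<lambda>i. if P i then c else 0) = (\<lambda>i. c * indicator {i0} i)"
    using i0(1) by (auto simp: fun_eq_iff split: split_indicator dest: i0(2))
  then show ?thesis
    by (simp add: nn_integral_cmult_indicator)
qed

lemma borel_measurable_cnj [measurable]:
  "f \<in> borel_measurable M \<Longrightarrow> (\<lambda>x. cnj (f x :: complex)) \<in> borel_measurable M"
  by (rule borel_measurable_continuous_on[where f=cnj]) (auto intro: continuous_intros)

lemma norm_mult_cnj_le: "cmod (a * cnj b) \<le> (cmod a)\<^sup>2 + (cmod b)\<^sup>2"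
proof -
  have "cmod a * cmod b \<le> 2 * cmod a * cmod b"
    by (simp add: mult.assoc)
  also have "\<dots> \<le> (cmod a)\<^sup>2 + (cmod b)\<^sup>2"
    by (rule sum_squares_bound)
  finally show ?thesis
    by (simp add: norm_mult)
qed

lemma scaleR_mult_cnj_eq_sqrt:
  assumes "0 \<le> a"
  shows "a *\<^sub>R (u * cnj v) = (complex_of_real (sqrt a) * u) * cnj (complex_of_real (sqrt a) * v)"
proof -
  have "complex_of_real (sqrt a) * complex_of_real (sqrt a) = complex_of_real a"
    using assms by (simp flip: of_real_mult)
  then show ?thesis
    by (simp add: scaleR_conv_of_real)
qed

lemma nc_adj_mult_uminus:
  fixes G F :: "'g::group_add \<Rightarrow> complex"
  shows "nc_adj_mult G F (-\<gamma>) = (\<Sum>\<^sub>\<infinity>\<zeta>. F \<zeta> * cnj (G (\<zeta> + \<gamma>)))"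
proof -
  have "(\<Sum>\<^sub>\<infinity>\<zeta>. F \<zeta> * cnj (G (\<zeta> + \<gamma>))) = (\<Sum>\<^sub>\<infinity>\<eta>. F (\<eta> + -\<gamma>) * cnj (G (\<eta> + -\<gamma> + \<gamma>)))"
    by (rule infsum_reindex_bij_betw[OF bij_plus_right, symmetric])
  then show ?thesis
    by (simp add: nc_adj_mult_def add.assoc mult.commute)
qed

lemma l2_norm2_nonneg: "0 \<le> l2_norm2 c"
  unfolding l2_norm2_def by (rule infsum_nonneg) simp

lemma l2_norm2_eq_nn_integral:
  "l2_norm2 c = enn2real (\<integral>\<^sup>+g. ennreal ((cmod (c g))\<^sup>2) \<partial>count_space UNIV)"
  unfolding l2_norm2_def by (rule infsum_eq_enn2real_nn_integral) simp

lemma in_l2_iff_nn_integral_finite: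
  "in_l2 c \<longleftrightarrow> (\<integral>\<^sup>+g. ennreal ((cmod (c g))\<^sup>2) \<partial>count_space UNIV) < \<infinity>"
  unfolding in_l2_def by (rule summable_on_iff_nn_integral_finite) simp

lemma nn_integral_l2_norm2:
  assumes "AE x in N. in_l2 (F x)"
  shows "(\<integral>\<^sup>+x. l2_norm2 (F x) \<partial>N)
    = (\<integral>\<^sup>+x. (\<integral>\<^sup>+g. ennreal ((cmod (F x g))\<^sup>2) \<partial>count_space UNIV) \<partial>N)"
  using assms
  by (intro nn_integral_cong_AE, eventually_elim)
     (simp add: l2_norm2_eq_nn_integral in_l2_iff_nn_integral_finite less_top[symmetric])

lemma L2_vec_iff_nn_integral_finite:
  fixes F :: "'a \<Rightarrow> 'g::countable \<Rightarrow> complex"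
  assumes [measurable]: "\<And>g. (\<lambda>x. F x g) \<in> borel_measurable N"
  shows "L2_vec N F \<longleftrightarrow>
    (\<integral>\<^sup>+x. (\<integral>\<^sup>+g. ennreal ((cmod (F x g))\<^sup>2) \<partial>count_space UNIV) \<partial>N) < \<infinity>"
    (is "_ \<longleftrightarrow> ?S < \<infinity>")
proof
  assume "L2_vec N F"
  then have "AE x in N. in_l2 (F x)" and "integrable N (\<lambda>x. l2_norm2 (F x))"
    unfolding L2_vec_def by auto
  then show "?S < \<infinity>"
    by (simp add: integrable_iff_bounded l2_norm2_nonneg nn_integral_l2_norm2)
next
  assume finite: "?S < \<infinity>"
  have [measurable]: "(\<lambda>x. \<integral>\<^sup>+g. ennreal ((cmod (F x g))\<^sup>2) \<partial>count_space UNIV) \<in> borel_measurable N"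
    by (rule borel_measurable_nn_integral_count_space) measurable
  have "AE x in N. (\<integral>\<^sup>+g. ennreal ((cmod (F x g))\<^sup>2) \<partial>count_space UNIV) \<noteq> \<infinity>"
    by (rule nn_integral_PInf_AE) (use finite in auto)
  then have "AE x in N. in_l2 (F x)"
    by eventually_elim (simp add: in_l2_iff_nn_integral_finite less_top)
  moreover from this have "integrable N (\<lambda>x. l2_norm2 (F x))"
    using finite by (simp add: integrable_iff_bounded l2_norm2_nonneg nn_integral_l2_norm2)
      (simp add: l2_norm2_eq_nn_integral)
  ultimately show "L2_vec N F"
    unfolding L2_vec_def by simp
qed

lemma integral_l2_norm2:
  assumes "L2_vec N F"
  shows "(\<integral>x. l2_norm2 (F x) \<partial>N)
    = enn2real (\<integral>\<^sup>+x. (\<integral>\<^sup>+g. ennreal ((cmod (F x g))\<^sup>2) \<partial>count_space UNIV) \<partial>N)"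
proof -
  have "AE x in N. in_l2 (F x)" and "(\<lambda>x. l2_norm2 (F x)) \<in> borel_measurable N"
    using assms unfolding L2_vec_def by auto
  then show ?thesis
    by (simp add: integral_eq_nn_integral l2_norm2_nonneg nn_integral_l2_norm2)
qed

lemma L2_fun_iff_nn_integral_finite:
  "L2_fun M \<phi> \<longleftrightarrow> \<phi> \<in> borel_measurable M \<and> (\<integral>\<^sup>+x. ennreal ((cmod (\<phi> x))\<^sup>2) \<partial>M) < \<infinity>"
  unfolding L2_fun_def by (auto simp: integrable_iff_bounded)

lemma integral_L2_fun:
  "L2_fun M \<phi> \<Longrightarrow> (\<integral>x. (cmod (\<phi> x))\<^sup>2 \<partial>M) = enn2real (\<integral>\<^sup>+x. ennreal ((cmod (\<phi> x))\<^sup>2) \<partial>M)"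
  unfolding L2_fun_def by (intro integral_eq_nn_integral) (auto intro: borel_measurable_integrable)

lemma integrable_mult_cnj:
  assumes "L2_fun M \<phi>" "L2_fun M \<psi>"
  shows "integrable M (\<lambda>x. \<phi> x * cnj (\<psi> x))"
proof (rule Bochner_Integration.integrable_bound)
  show "integrable M (\<lambda>x. (cmod (\<phi> x))\<^sup>2 + (cmod (\<psi> x))\<^sup>2)"
    using assms unfolding L2_fun_def by auto
  show "(\<lambda>x. \<phi> x * cnj (\<psi> x)) \<in> borel_measurable M"
    using assms unfolding L2_fun_def by auto
  show "AE x in M. norm (\<phi> x * cnj (\<psi> x)) \<le> norm ((cmod (\<phi> x))\<^sup>2 + (cmod (\<psi> x))\<^sup>2)"
    using norm_mult_cnj_le by (intro AE_I2) simp
qed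

lemma norm_Pi_sigma_sq:
  "0 \<le> J (-\<gamma>) x \<Longrightarrow> (cmod (Pi_sigma \<sigma> J \<gamma> \<phi> x))\<^sup>2 = J (-\<gamma>) x * (cmod (\<phi> (\<sigma> (-\<gamma>) x)))\<^sup>2"
  unfolding Pi_sigma_def by (simp add: norm_mult power_mult_distrib)

lemma zak_linear:
  "zak \<sigma> J (\<lambda>x. a * \<phi> x + b * \<psi> x) y = (\<lambda>g. a * zak \<sigma> J \<phi> y g + b * zak \<sigma> J \<psi> y g)"
  by (simp add: zak_def Pi_sigma_def fun_eq_iff algebra_simps)

locale tiled_quasi_invariant_action = sigma_finite_measure M for M :: "'x measure" +
  fixes \<sigma> :: "'g::{group_add,countable} \<Rightarrow> 'x \<Rightarrow> 'x" and J :: "'g \<Rightarrow> 'x \<Rightarrow> real"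
    and C :: "'x set"
  assumes quasi_invariant: "quasi_invariant_action M \<sigma> J"
    and tiling: "tiling_set M \<sigma> C"
begin

lemma measurable_action [measurable]: "\<sigma> g \<in> M \<rightarrow>\<^sub>M M"
  using quasi_invariant unfolding quasi_invariant_action_def by blast

lemma borel_measurable_jacobian [measurable]: "J g \<in> borel_measurable M"
  using quasi_invariant unfolding quasi_invariant_action_def by blast

lemma AE_jacobian_pos: "AE x in M. J g x > 0"
  using quasi_invariant unfolding quasi_invariant_action_def by blast

lemma AE_action_add: "AE x in M. \<sigma> (a + b) x = \<sigma> a (\<sigma> b x)"
  using quasi_invariant unfolding quasi_invariant_action_def by blast

lemma AE_action_zero: "AE x in M. \<sigma> 0 x = x"
  using quasi_invariant unfolding quasi_invariant_action_def by blast

lemma emeasure_action_vimage: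
  "E \<in> sets M \<Longrightarrow> emeasure M (\<sigma> g -` E \<inter> space M) = (\<integral>\<^sup>+x\<in>E. ennreal (J (-g) x) \<partial>M)"
  using quasi_invariant unfolding quasi_invariant_action_def by (metis minus_minus)

lemma sets_tiling_set [measurable]: "C \<in> sets M"
  using tiling unfolding tiling_set_def by blast

lemma AE_action_minus_left: "AE x in M. \<sigma> (-g) (\<sigma> g x) = x"
  using AE_action_add[of "-g" g] AE_action_zero by eventually_elim simp

lemma AE_action_minus_right: "AE x in M. \<sigma> g (\<sigma> (-g) x) = x"
  using AE_action_add[of g "-g"] AE_action_zero by eventually_elim simp

lemma distr_action: "distr M M (\<sigma> g) = density M (\<lambda>x. ennreal (J (-g) x))"
  by (rule measure_eqI) (simp_all add: emeasure_distr emeasure_density emeasure_action_vimage)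

lemma nn_integral_action:
  assumes [measurable]: "f \<in> borel_measurable M"
  shows "(\<integral>\<^sup>+x. f (\<sigma> g x) \<partial>M) = (\<integral>\<^sup>+x. ennreal (J (-g) x) * f x \<partial>M)"
proof -
  have "(\<integral>\<^sup>+x. f (\<sigma> g x) \<partial>M) = (\<integral>\<^sup>+x. f x \<partial>distr M M (\<sigma> g))"
    by (simp add: nn_integral_distr)
  then show ?thesis
    by (simp add: distr_action nn_integral_density)
qed

lemma AE_action:
  assumes "AE x in M. P x"
  shows "AE x in M. P (\<sigma> g x)"
proof -
  obtain N where N: "{x\<in>space M. \<not> P x} \<subseteq> N" "N \<in> null_sets M"
    using assms unfolding eventually_ae_filter by blast
  have [measurable]: "N \<in> sets M"
    using N(2) by (rule null_setsD2)
  have "emeasure M (\<sigma> g -` N \<inter> space M) = 0"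
    using N(2) by (simp add: emeasure_action_vimage nn_integral_null_set)
  moreover have "\<sigma> g -` N \<inter> space M \<in> sets M"
    by measurable
  ultimately show ?thesis
    using N(1) measurable_space[OF measurable_action]
    by (intro AE_I'[of "\<sigma> g -` N \<inter> space M"]) auto
qed

lemma AE_unique_tile: "AE y in M. \<exists>!g. \<sigma> g y \<in> C"
proof -
  have tile_sets: "tile M \<sigma> C g \<in> sets M" for g
    unfolding tile_def by measurable
  have "AE y in M. a \<noteq> b \<longrightarrow> \<not> (y \<in> tile M \<sigma> C a \<and> y \<in> tile M \<sigma> C b)" for a b
  proof (cases "a = b")
    case False
    then have "tile M \<sigma> C a \<inter> tile M \<sigma> C b \<in> null_sets M"
      using tiling tile_sets unfolding tiling_set_def by blast
    then show ?thesis
      by (rule AE_I') blast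
  qed simp
  then have disjoint: "AE y in M. \<forall>a b. a \<noteq> b \<longrightarrow> \<not> (y \<in> tile M \<sigma> C a \<and> y \<in> tile M \<sigma> C b)"
    by (simp add: AE_all_countable)
  have "space M - (\<Union>g. tile M \<sigma> C g) \<in> null_sets M"
    using tiling tile_sets unfolding tiling_set_def by blast
  then have cover: "AE y in M. \<exists>g. y \<in> tile M \<sigma> C g"
    by (rule AE_I') blast
  from disjoint cover show ?thesis
  proof eventually_elim
    case (elim y)
    then obtain a where a: "y \<in> tile M \<sigma> C a"
      by blast
    show ?case
    proof (rule ex1I[of _ "-a"])
      show "\<sigma> (-a) y \<in> C"
        using a by (simp add: tile_def)
      fix b
      assume "\<sigma> b y \<in> C"
      then have "y \<in> tile M \<sigma> C (-b)"
        using a by (simp add: tile_def)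
      with a elim(1) show "b = -a"
        by (metis minus_minus)
    qed
  qed
qed

lemma nn_integral_translated_tile:
  assumes [measurable]: "H \<in> borel_measurable M"
  shows "(\<integral>\<^sup>+x. ennreal (J (-g) x) * (indicator C x * H (\<sigma> (-g) x)) \<partial>M)
    = (\<integral>\<^sup>+y. indicator C (\<sigma> g y) * H y \<partial>M)"
proof -
  have "(\<integral>\<^sup>+x. ennreal (J (-g) x) * (indicator C x * H (\<sigma> (-g) x)) \<partial>M)
      = (\<integral>\<^sup>+y. indicator C (\<sigma> g y) * H (\<sigma> (-g) (\<sigma> g y)) \<partial>M)"
    by (rule nn_integral_action[symmetric]) simp
  also have "\<dots> = (\<integral>\<^sup>+y. indicator C (\<sigma> g y) * H y \<partial>M)"
    by (rule nn_integral_cong_AE) (use AE_action_minus_left[of g] in eventually_elim, simp)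
  finally show ?thesis .
qed

lemma nn_integral_tiling:
  assumes [measurable]: "H \<in> borel_measurable M"
  shows "(\<integral>\<^sup>+y. H y \<partial>M) =
    (\<integral>\<^sup>+x. (\<integral>\<^sup>+g. ennreal (J (-g) x) * H (\<sigma> (-g) x) \<partial>count_space UNIV) \<partial>restrict_space M C)"
proof -
  have "(\<integral>\<^sup>+x. (\<integral>\<^sup>+g. ennreal (J (-g) x) * H (\<sigma> (-g) x) \<partial>count_space UNIV) \<partial>restrict_space M C)
     = (\<integral>\<^sup>+x. (\<integral>\<^sup>+g. ennreal (J (-g) x) * H (\<sigma> (-g) x) \<partial>count_space UNIV) * indicator C x \<partial>M)"
    by (rule nn_integral_restrict_space) simp
  also have "\<dots> = (\<integral>\<^sup>+x. (\<integral>\<^sup>+g. ennreal (J (-g) x) * (indicator C x * H (\<sigma> (-g) x)) \<partial>count_space UNIV) \<partial>M)"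
  proof (rule nn_integral_cong)
    fix x
    have "(\<integral>\<^sup>+g. ennreal (J (-g) x) * H (\<sigma> (-g) x) \<partial>count_space UNIV) * indicator C x
      = (\<integral>\<^sup>+g. ennreal (J (-g) x) * H (\<sigma> (-g) x) * indicator C x \<partial>count_space UNIV)"
      by (rule nn_integral_multc[symmetric]) simp
    then show "(\<integral>\<^sup>+g. ennreal (J (-g) x) * H (\<sigma> (-g) x) \<partial>count_space UNIV) * indicator C x
      = (\<integral>\<^sup>+g. ennreal (J (-g) x) * (indicator C x * H (\<sigma> (-g) x)) \<partial>count_space UNIV)"
      by (simp add: mult_ac)
  qed
  also have "\<dots> = (\<integral>\<^sup>+g. (\<integral>\<^sup>+x. ennreal (J (-g) x) * (indicator C x * H (\<sigma> (-g) x)) \<partial>M) \<partial>count_space UNIV)"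
    by (rule nn_integral_count_space_nn_integral) auto
  also have "\<dots> = (\<integral>\<^sup>+g. (\<integral>\<^sup>+y. indicator C (\<sigma> g y) * H y \<partial>M) \<partial>count_space UNIV)"
    by (simp only: nn_integral_translated_tile[OF assms])
  also have "\<dots> = (\<integral>\<^sup>+y. (\<integral>\<^sup>+g. indicator C (\<sigma> g y) * H y \<partial>count_space UNIV) \<partial>M)"
    by (rule nn_integral_count_space_nn_integral[symmetric]) auto
  also have "\<dots> = (\<integral>\<^sup>+y. H y \<partial>M)"
  proof (rule nn_integral_cong_AE)
    show "AE y in M. (\<integral>\<^sup>+g. indicator C (\<sigma> g y) * H y \<partial>count_space UNIV) = H y"
      using AE_unique_tile
    proof eventually_elim
      case (elim y)
      have "(\<lambda>g. indicator C (\<sigma> g y) * H y) = (\<lambda>g. if \<sigma> g y \<in> C then H y else 0)"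
        by (simp add: fun_eq_iff)
      then show ?case
        using nn_integral_count_space_if_unique[OF elim] by simp
    qed
  qed
  finally show ?thesis ..
qed

lemma AE_all_jacobian_pos: "AE x in M. \<forall>g. 0 < J g x"
  by (simp add: AE_all_countable AE_jacobian_pos)

text \<open>Both sides are densities of \<^term>\<open>distr M M (\<sigma> (a + b))\<close>, computed once directly and
  once through \<open>\<sigma> (a + b) = \<sigma> a \<circ> \<sigma> b\<close>.\<close>

lemma jacobian_cocycle: "AE x in M. J (-(a + b)) x = J (-a) x * J (-b) (\<sigma> (-a) x)"
proof -
  have "density M (\<lambda>x. ennreal (J (-(a + b)) x))
      = density M (\<lambda>x. ennreal (J (-a) x) * ennreal (J (-b) (\<sigma> (-a) x)))"
  proof (rule measure_eqI)
    fix E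
    assume "E \<in> sets (density M (\<lambda>x. ennreal (J (-(a + b)) x)))"
    then have [measurable]: "E \<in> sets M"
      by simp
    have "(\<integral>\<^sup>+x. ennreal (J (-(a + b)) x) * indicator E x \<partial>M) = (\<integral>\<^sup>+x. indicator E (\<sigma> (a + b) x) \<partial>M)"
      by (rule nn_integral_action[symmetric]) simp
    also have "\<dots> = (\<integral>\<^sup>+x. indicator E (\<sigma> a (\<sigma> b x)) \<partial>M)"
      by (rule nn_integral_cong_AE) (use AE_action_add[of a b] in eventually_elim, simp)
    also have "\<dots> = (\<integral>\<^sup>+x. ennreal (J (-b) x) * indicator E (\<sigma> a x) \<partial>M)"
      by (rule nn_integral_action[of "\<lambda>y. indicator E (\<sigma> a y)"]) simp
    also have "\<dots> = (\<integral>\<^sup>+x. ennreal (J (-b) (\<sigma> (-a) (\<sigma> a x))) * indicator E (\<sigma> a x) \<partial>M)"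
      by (rule nn_integral_cong_AE) (use AE_action_minus_left[of a] in eventually_elim, simp)
    also have "\<dots> = (\<integral>\<^sup>+x. ennreal (J (-a) x) * (ennreal (J (-b) (\<sigma> (-a) x)) * indicator E x) \<partial>M)"
      by (rule nn_integral_action[of "\<lambda>y. ennreal (J (-b) (\<sigma> (-a) y)) * indicator E y"]) simp
    finally show "emeasure (density M (\<lambda>x. ennreal (J (-(a + b)) x))) E
        = emeasure (density M (\<lambda>x. ennreal (J (-a) x) * ennreal (J (-b) (\<sigma> (-a) x)))) E"
      by (simp add: emeasure_density mult_ac)
  qed simp
  then have "AE x in M. ennreal (J (-(a + b)) x) = ennreal (J (-a) x) * ennreal (J (-b) (\<sigma> (-a) x))"
    by (rule density_unique[rotated 2]) simp_all
  moreover have "AE x in M. J (-b) (\<sigma> (-a) x) > 0"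
    by (rule AE_action) (rule AE_jacobian_pos)
  ultimately show ?thesis
    using AE_all_jacobian_pos
    by eventually_elim (simp add: ennreal_mult[symmetric] less_imp_le)
qed

lemma AE_restrict_tiling_set: "AE x in M. P x \<Longrightarrow> AE x in restrict_space M C. P x"
  by (subst AE_restrict_space_iff) (auto elim: AE_mp)

subsection \<open>The Zak transform\<close>

lemma borel_measurable_zak [measurable]:
  assumes [measurable]: "\<phi> \<in> borel_measurable M"
  shows "(\<lambda>x. zak \<sigma> J \<phi> x g) \<in> borel_measurable M"
  unfolding zak_def Pi_sigma_def by measurable

lemma nn_integral_norm_zak:
  assumes [measurable]: "\<phi> \<in> borel_measurable M"
  shows "(\<integral>\<^sup>+x. (\<integral>\<^sup>+g. ennreal ((cmod (zak \<sigma> J \<phi> x g))\<^sup>2) \<partial>count_space UNIV) \<partial>restrict_space M C)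
     = (\<integral>\<^sup>+y. ennreal ((cmod (\<phi> y))\<^sup>2) \<partial>M)"
proof -
  have "AE x in M. (\<integral>\<^sup>+g. ennreal ((cmod (zak \<sigma> J \<phi> x g))\<^sup>2) \<partial>count_space UNIV)
      = (\<integral>\<^sup>+g. ennreal (J (-g) x) * ennreal ((cmod (\<phi> (\<sigma> (-g) x)))\<^sup>2) \<partial>count_space UNIV)"
    using AE_all_jacobian_pos
  proof eventually_elim
    case (elim x)
    then have "0 \<le> J (-g) x" for g
      by (simp add: less_imp_le)
    then show ?case
      by (intro nn_integral_cong) (simp add: zak_def norm_Pi_sigma_sq ennreal_mult)
  qed
  then have "(\<integral>\<^sup>+x. (\<integral>\<^sup>+g. ennreal ((cmod (zak \<sigma> J \<phi> x g))\<^sup>2) \<partial>count_space UNIV) \<partial>restrict_space M C)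
    = (\<integral>\<^sup>+x. (\<integral>\<^sup>+g. ennreal (J (-g) x) * ennreal ((cmod (\<phi> (\<sigma> (-g) x)))\<^sup>2) \<partial>count_space UNIV)
        \<partial>restrict_space M C)"
    by (intro nn_integral_cong_AE AE_restrict_tiling_set)
  also have "\<dots> = (\<integral>\<^sup>+y. ennreal ((cmod (\<phi> y))\<^sup>2) \<partial>M)"
    by (rule nn_integral_tiling[symmetric]) measurable
  finally show ?thesis .
qed

lemma zak_isometric:
  assumes "L2_fun M \<phi>"
  shows "L2_vec (restrict_space M C) (zak \<sigma> J \<phi>)"
    and "(\<integral>x. l2_norm2 (zak \<sigma> J \<phi> x) \<partial>restrict_space M C) = (\<integral>x. (cmod (\<phi> x))\<^sup>2 \<partial>M)"
proof -
  have [measurable]: "\<phi> \<in> borel_measurable M"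
    and finite: "(\<integral>\<^sup>+x. ennreal ((cmod (\<phi> x))\<^sup>2) \<partial>M) < \<infinity>"
    using assms by (simp_all add: L2_fun_iff_nn_integral_finite)
  have [measurable]: "(\<lambda>x. zak \<sigma> J \<phi> x g) \<in> borel_measurable (restrict_space M C)" for g
    by (rule measurable_restrict_space1) measurable
  show L2: "L2_vec (restrict_space M C) (zak \<sigma> J \<phi>)"
    using finite by (simp add: L2_vec_iff_nn_integral_finite nn_integral_norm_zak)
  show "(\<integral>x. l2_norm2 (zak \<sigma> J \<phi> x) \<partial>restrict_space M C) = (\<integral>x. (cmod (\<phi> x))\<^sup>2 \<partial>M)"
    using assms by (simp add: integral_l2_norm2[OF L2] nn_integral_norm_zak integral_L2_fun)
qed

lemma L2_fun_Pi_sigma: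
  assumes "L2_fun M \<psi>"
  shows "L2_fun M (Pi_sigma \<sigma> J \<gamma> \<psi>)"
proof -
  have [measurable]: "\<psi> \<in> borel_measurable M"
    and finite: "(\<integral>\<^sup>+x. ennreal ((cmod (\<psi> x))\<^sup>2) \<partial>M) < \<infinity>"
    using assms by (simp_all add: L2_fun_iff_nn_integral_finite)
  have "(\<integral>\<^sup>+y. ennreal ((cmod (Pi_sigma \<sigma> J \<gamma> \<psi> y))\<^sup>2) \<partial>M)
      = (\<integral>\<^sup>+y. ennreal (J (-\<gamma>) y) * ennreal ((cmod (\<psi> (\<sigma> (-\<gamma>) y)))\<^sup>2) \<partial>M)"
    by (rule nn_integral_cong_AE)
       (use AE_jacobian_pos[of "-\<gamma>"] in eventually_elim, simp add: norm_Pi_sigma_sq ennreal_mult)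
  also have "\<dots> = (\<integral>\<^sup>+x. ennreal ((cmod (\<psi> (\<sigma> (-\<gamma>) (\<sigma> \<gamma> x))))\<^sup>2) \<partial>M)"
    by (rule nn_integral_action[symmetric]) simp
  also have "\<dots> = (\<integral>\<^sup>+x. ennreal ((cmod (\<psi> x))\<^sup>2) \<partial>M)"
    by (rule nn_integral_cong_AE) (use AE_action_minus_left[of \<gamma>] in eventually_elim, simp)
  finally show ?thesis
    using finite by (simp add: L2_fun_iff_nn_integral_finite Pi_sigma_def)
qed

lemma zak_Pi_sigma:
  "AE y in restrict_space M C. zak \<sigma> J (Pi_sigma \<sigma> J \<gamma> \<phi>) y = rho_adj_right (zak \<sigma> J \<phi> y) \<gamma>"
proof (rule AE_restrict_tiling_set)
  have "AE x in M. \<forall>\<zeta>. J (-(\<zeta> + \<gamma>)) x = J (-\<zeta>) x * J (-\<gamma>) (\<sigma> (-\<zeta>) x)"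
    by (simp add: AE_all_countable jacobian_cocycle)
  moreover have "AE x in M. \<forall>\<zeta>. \<sigma> (-\<gamma> + -\<zeta>) x = \<sigma> (-\<gamma>) (\<sigma> (-\<zeta>) x)"
    unfolding AE_all_countable by (intro allI AE_action_add)
  ultimately show "AE x in M. zak \<sigma> J (Pi_sigma \<sigma> J \<gamma> \<phi>) x = rho_adj_right (zak \<sigma> J \<phi> x) \<gamma>"
    by eventually_elim
       (simp add: fun_eq_iff zak_def Pi_sigma_def rho_adj_right_def minus_add real_sqrt_mult)
qed

lemma helson_map_zak: "helson_map M (Pi_sigma \<sigma> J) (restrict_space M C) (zak \<sigma> J)"
  unfolding helson_map_def using zak_isometric zak_Pi_sigma by (auto simp: zak_linear)

subsection \<open>The inverse Zak transform\<close>

text \<open>Junk (\<open>LEAST\<close> of an empty predicate) at the null set of points \<open>y\<close> with no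
  \<open>\<sigma> \<delta> y \<in> C\<close>.\<close>

definition tile_index :: "'x \<Rightarrow> 'g" where
  "tile_index y = from_nat (LEAST n. \<sigma> (from_nat n) y \<in> C)"

lemma measurable_tile_index [measurable]: "tile_index \<in> M \<rightarrow>\<^sub>M count_space UNIV"
proof -
  have "(\<lambda>y. LEAST n. \<sigma> (from_nat n) y \<in> C) \<in> M \<rightarrow>\<^sub>M count_space UNIV"
    by measurable
  then show ?thesis
    unfolding tile_index_def by (rule measurable_compose) simp
qed

lemma AE_tile_index: "AE y in M. \<forall>\<delta>. \<sigma> \<delta> y \<in> C \<longleftrightarrow> \<delta> = tile_index y"
  using AE_unique_tile
proof eventually_elim
  case (elim y)
  then obtain \<delta> where \<delta>: "\<sigma> \<delta> y \<in> C" "\<And>\<delta>'. \<sigma> \<delta>' y \<in> C \<Longrightarrow> \<delta>' = \<delta>"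
    by blast
  have "\<sigma> (from_nat (to_nat \<delta>)) y \<in> C"
    using \<delta>(1) by simp
  then have "\<sigma> (tile_index y) y \<in> C"
    unfolding tile_index_def by (rule LeastI)
  then show ?case
    using \<delta> by blast
qed

text \<open>\<open>F\<close> is only meaningful on \<open>C\<close>; the guard extends it by \<open>0\<close>, which keeps it measurable
  on all of \<open>M\<close>.\<close>

definition zak_inverse :: "('x \<Rightarrow> 'g \<Rightarrow> complex) \<Rightarrow> 'x \<Rightarrow> complex" where
  "zak_inverse F y = (let \<delta> = tile_index y; x = \<sigma> \<delta> y in
     (if x \<in> C then F x \<delta> else 0) / complex_of_real (sqrt (J (-\<delta>) x)))"

lemma borel_measurable_zak_inverse:
  assumes "\<And>g. (\<lambda>x. F x g) \<in> borel_measurable (restrict_space M C)"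
  shows "zak_inverse F \<in> borel_measurable M"
proof -
  have [measurable]: "(\<lambda>x. if x \<in> C then F x g else 0) \<in> borel_measurable M" for g
    using assms[of g] by (subst (asm) measurable_restrict_space_iff) auto
  show ?thesis
    unfolding zak_inverse_def Let_def
    by (rule measurable_compose_countable[OF _ measurable_tile_index]) measurable
qed

lemma zak_zak_inverse: "AE x in restrict_space M C. zak \<sigma> J (zak_inverse F) x = F x"
proof -
  have "AE x in M. \<forall>\<gamma>. \<sigma> \<gamma> (\<sigma> (-\<gamma>) x) = x"
    by (simp add: AE_all_countable AE_action_minus_right)
  moreover have "AE x in M. \<forall>\<gamma> \<delta>. \<sigma> \<delta> (\<sigma> (-\<gamma>) x) \<in> C \<longleftrightarrow> \<delta> = tile_index (\<sigma> (-\<gamma>) x)"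
    by (subst AE_all_countable) (intro allI AE_action AE_tile_index)
  ultimately have "AE x in M. x \<in> C \<longrightarrow> zak \<sigma> J (zak_inverse F) x = F x"
    using AE_all_jacobian_pos
  proof eventually_elim
    case (elim x)
    have "zak \<sigma> J (zak_inverse F) x \<gamma> = F x \<gamma>" if "x \<in> C" for \<gamma>
    proof -
      have "tile_index (\<sigma> (-\<gamma>) x) = \<gamma>"
        using elim(1,2) \<open>x \<in> C\<close> by metis
      moreover have "complex_of_real (sqrt (J (-\<gamma>) x)) \<noteq> 0"
        using elim(3) by (simp add: less_imp_neq[symmetric])
      ultimately show ?thesis
        using elim(1) \<open>x \<in> C\<close> by (simp add: zak_def Pi_sigma_def zak_inverse_def)
    qed
    then show ?case
      by auto
  qed
  then show ?thesis
    by (subst AE_restrict_space_iff) simp_all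
qed

lemma L2_fun_zak_inverse:
  assumes "L2_vec (restrict_space M C) F"
  shows "L2_fun M (zak_inverse F)"
proof -
  have [measurable]: "(\<lambda>x. F x g) \<in> borel_measurable (restrict_space M C)" for g
    using assms unfolding L2_vec_def by blast
  have [measurable]: "zak_inverse F \<in> borel_measurable M"
    by (rule borel_measurable_zak_inverse) simp
  have "(\<integral>\<^sup>+y. ennreal ((cmod (zak_inverse F y))\<^sup>2) \<partial>M)
      = (\<integral>\<^sup>+x. (\<integral>\<^sup>+g. ennreal ((cmod (zak \<sigma> J (zak_inverse F) x g))\<^sup>2) \<partial>count_space UNIV)
          \<partial>restrict_space M C)"
    by (rule nn_integral_norm_zak[symmetric]) simp
  also have "\<dots> = (\<integral>\<^sup>+x. (\<integral>\<^sup>+g. ennreal ((cmod (F x g))\<^sup>2) \<partial>count_space UNIV) \<partial>restrict_space M C)"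
    by (rule nn_integral_cong_AE) (use zak_zak_inverse[of F] in eventually_elim, simp)
  also have "\<dots> < \<infinity>"
    using assms by (simp add: L2_vec_iff_nn_integral_finite)
  finally show ?thesis
    by (simp add: L2_fun_iff_nn_integral_finite)
qed

lemma zak_surjective:
  "L2_vec (restrict_space M C) F \<Longrightarrow>
    \<exists>\<phi>. L2_fun M \<phi> \<and> (AE x in restrict_space M C. zak \<sigma> J \<phi> x = F x)"
  using L2_fun_zak_inverse zak_zak_inverse by blast

subsection \<open>The bracket map\<close>

lemma pair_sigma_finite_tiling: "pair_sigma_finite (restrict_space M C) (count_space (UNIV::'g set))"
  by (intro pair_sigma_finite.intro sigma_finite_measure_restrict_space
      sigma_finite_measure_count_space_countable) (simp_all add: sigma_finite_measure_axioms)

lemma measurable_action_tiling [measurable]: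
  "(\<lambda>p. \<sigma> (-(snd p)) (fst p)) \<in> restrict_space M C \<Otimes>\<^sub>M count_space UNIV \<rightarrow>\<^sub>M M"
  using measurable_uncurry_countable[of "\<lambda>x g. \<sigma> (-g) x" "restrict_space M C" M]
  by (simp add: measurable_restrict_space1)

lemma borel_measurable_jacobian_tiling [measurable]:
  "(\<lambda>p. max 0 (J (-(snd p)) (fst p))) \<in> borel_measurable (restrict_space M C \<Otimes>\<^sub>M count_space UNIV)"
  using measurable_uncurry_countable[of "\<lambda>x g. max 0 (J (-g) x)" "restrict_space M C" borel]
  by (simp add: measurable_restrict_space1)

text \<open>The periodization formula as an identity of measures: \<open>M\<close> is the image of
  \<open>C \<times> \<Gamma>\<close>, weighted by the Jacobian, under \<open>(x, g) \<mapsto> \<sigma> (-g) x\<close>. The clamp \<open>max 0\<close>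
  makes the weight nonnegative everywhere, as the Bochner lemmas on densities require.\<close>

lemma distr_density_tiling:
  "distr (density (restrict_space M C \<Otimes>\<^sub>M count_space UNIV) (\<lambda>p. ennreal (max 0 (J (-(snd p)) (fst p)))))
     M (\<lambda>p. \<sigma> (-(snd p)) (fst p)) = M"
  (is "distr ?D M ?\<Phi> = M")
proof (rule measure_eqI)
  interpret Q: pair_sigma_finite "restrict_space M C" "count_space (UNIV::'g set)"
    by (rule pair_sigma_finite_tiling)
  fix E
  assume "E \<in> sets (distr ?D M ?\<Phi>)"
  then have [measurable]: "E \<in> sets M"
    by simp
  have [measurable]: "?\<Phi> -` E \<inter> space (restrict_space M C \<Otimes>\<^sub>M count_space UNIV)
      \<in> sets (restrict_space M C \<Otimes>\<^sub>M count_space UNIV)"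
    by measurable
  have "emeasure (distr ?D M ?\<Phi>) E
      = (\<integral>\<^sup>+p. ennreal (max 0 (J (-(snd p)) (fst p))) * indicator E (?\<Phi> p)
          \<partial>(restrict_space M C \<Otimes>\<^sub>M count_space UNIV))"
    by (simp add: emeasure_distr emeasure_density del: ennreal_max_0)
       (auto intro!: nn_integral_cong split: split_indicator)
  also have "\<dots> = (\<integral>\<^sup>+x. (\<integral>\<^sup>+g. ennreal (J (-g) x) * indicator E (\<sigma> (-g) x) \<partial>count_space UNIV)
      \<partial>restrict_space M C)"
  proof -
    have "(\<lambda>p. ennreal (max 0 (J (-(snd p)) (fst p))) * indicator E (?\<Phi> p))
        \<in> borel_measurable (restrict_space M C \<Otimes>\<^sub>M count_space UNIV)"
      by measurable
    from Q.M2.nn_integral_fst[OF this] show ?thesis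
      by simp
  qed
  also have "\<dots> = emeasure M E"
    by (simp add: nn_integral_tiling[symmetric])
  finally show "emeasure (distr ?D M ?\<Phi>) E = emeasure M E" .
qed simp

lemma integral_tiling:
  fixes f :: "'x \<Rightarrow> complex"
  assumes "integrable M f"
  shows "integrable (restrict_space M C \<Otimes>\<^sub>M count_space UNIV)
      (\<lambda>p. max 0 (J (-(snd p)) (fst p)) *\<^sub>R f (\<sigma> (-(snd p)) (fst p)))"
    and "integral\<^sup>L M f =
      (\<integral>x. (\<integral>g. max 0 (J (-g) x) *\<^sub>R f (\<sigma> (-g) x) \<partial>count_space UNIV) \<partial>restrict_space M C)"
proof -
  interpret Q: pair_sigma_finite "restrict_space M C" "count_space (UNIV::'g set)"
    by (rule pair_sigma_finite_tiling)
  let ?Q = "restrict_space M C \<Otimes>\<^sub>M count_space (UNIV::'g set)"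
  let ?j = "\<lambda>p. max 0 (J (-(snd p)) (fst p))"
  let ?\<Phi> = "\<lambda>p. \<sigma> (-(snd p)) (fst p)"
  have [measurable]: "f \<in> borel_measurable M"
    using assms by auto
  have "integrable (distr (density ?Q (\<lambda>p. ennreal (?j p))) M ?\<Phi>) f"
    unfolding distr_density_tiling by (rule assms)
  then have "integrable (density ?Q (\<lambda>p. ennreal (?j p))) (\<lambda>p. f (?\<Phi> p))"
    by (subst (asm) integrable_distr_eq) simp_all
  then show integrable: "integrable ?Q (\<lambda>p. ?j p *\<^sub>R f (?\<Phi> p))"
    by (subst (asm) integrable_density) simp_all
  have "integral\<^sup>L M f = integral\<^sup>L (distr (density ?Q (\<lambda>p. ennreal (?j p))) M ?\<Phi>) f"
    unfolding distr_density_tiling ..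
  also have "\<dots> = integral\<^sup>L (density ?Q (\<lambda>p. ennreal (?j p))) (\<lambda>p. f (?\<Phi> p))"
    by (rule integral_distr) simp_all
  also have "\<dots> = integral\<^sup>L ?Q (\<lambda>p. ?j p *\<^sub>R f (?\<Phi> p))"
    by (rule integral_density) simp_all
  also have "\<dots> = (\<integral>x. (\<integral>g. ?j (x, g) *\<^sub>R f (?\<Phi> (x, g)) \<partial>count_space UNIV) \<partial>restrict_space M C)"
    by (rule Q.integral_fst'[symmetric, OF integrable])
  finally show "integral\<^sup>L M f =
      (\<integral>x. (\<integral>g. max 0 (J (-g) x) *\<^sub>R f (\<sigma> (-g) x) \<partial>count_space UNIV) \<partial>restrict_space M C)"
    by simp
qed

lemma L2_inner_Pi_sigma_zak:
  assumes \<phi>: "L2_fun M \<phi>" and \<psi>: "L2_fun M \<psi>"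
  shows "L2_inner M \<phi> (Pi_sigma \<sigma> J \<gamma> \<psi>)
    = (\<integral>x. nc_adj_mult (zak \<sigma> J \<psi> x) (zak \<sigma> J \<phi> x) (-\<gamma>) \<partial>restrict_space M C)"
proof -
  interpret Q: pair_sigma_finite "restrict_space M C" "count_space (UNIV::'g set)"
    by (rule pair_sigma_finite_tiling)
  have [measurable]: "\<phi> \<in> borel_measurable M" "\<psi> \<in> borel_measurable M"
    using \<phi> \<psi> unfolding L2_fun_def by auto
  define f where "f y = \<phi> y * cnj (Pi_sigma \<sigma> J \<gamma> \<psi> y)" for y
  have f: "integrable M f"
    unfolding f_def by (rule integrable_mult_cnj[OF \<phi> L2_fun_Pi_sigma[OF \<psi>]])
  have pointwise: "max 0 (J (-g) x) *\<^sub>R f (\<sigma> (-g) x) = zak \<sigma> J \<phi> x g * cnj (zak \<sigma> J \<psi> x (g + \<gamma>))"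
    if "\<forall>g. 0 < J g x" "zak \<sigma> J (Pi_sigma \<sigma> J \<gamma> \<psi>) x = rho_adj_right (zak \<sigma> J \<psi> x) \<gamma>" for x g
  proof -
    have "max 0 (J (-g) x) *\<^sub>R f (\<sigma> (-g) x) = zak \<sigma> J \<phi> x g * cnj (zak \<sigma> J (Pi_sigma \<sigma> J \<gamma> \<psi>) x g)"
      using that(1) scaleR_mult_cnj_eq_sqrt[of "J (-g) x"]
      by (simp add: f_def zak_def Pi_sigma_def[of \<sigma> J g] less_imp_le)
    then show ?thesis
      using that(2) by (simp add: rho_adj_right_def)
  qed
  have "L2_inner M \<phi> (Pi_sigma \<sigma> J \<gamma> \<psi>) = integral\<^sup>L M f"
    unfolding L2_inner_def f_def ..
  also have "\<dots> = (\<integral>x. (\<integral>g. max 0 (J (-g) x) *\<^sub>R f (\<sigma> (-g) x) \<partial>count_space UNIV) \<partial>restrict_space M C)"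
    by (rule integral_tiling(2)[OF f])
  also have "\<dots> = (\<integral>x. nc_adj_mult (zak \<sigma> J \<psi> x) (zak \<sigma> J \<phi> x) (-\<gamma>) \<partial>restrict_space M C)"
  proof (rule integral_cong_AE)
    show "(\<lambda>x. \<integral>g. max 0 (J (-g) x) *\<^sub>R f (\<sigma> (-g) x) \<partial>count_space UNIV)
        \<in> borel_measurable (restrict_space M C)"
      using borel_measurable_integrable[OF integral_tiling(1)[OF f]]
      by (intro Q.M2.borel_measurable_lebesgue_integral) (simp add: case_prod_beta)
    show "(\<lambda>x. nc_adj_mult (zak \<sigma> J \<psi> x) (zak \<sigma> J \<phi> x) (-\<gamma>)) \<in> borel_measurable (restrict_space M C)"
      unfolding nc_adj_mult_def
      by (rule borel_measurable_infsum_countable, rule measurable_restrict_space1) measurable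
    have "AE x in restrict_space M C.
        integrable (count_space UNIV) (\<lambda>g. max 0 (J (-g) x) *\<^sub>R f (\<sigma> (-g) x))"
      using Q.AE_integrable_fst'[OF integral_tiling(1)[OF f]] by simp
    moreover have "AE x in restrict_space M C. \<forall>g. 0 < J g x"
      by (rule AE_restrict_tiling_set[OF AE_all_jacobian_pos])
    ultimately show "AE x in restrict_space M C.
        (\<integral>g. max 0 (J (-g) x) *\<^sub>R f (\<sigma> (-g) x) \<partial>count_space UNIV)
          = nc_adj_mult (zak \<sigma> J \<psi> x) (zak \<sigma> J \<phi> x) (-\<gamma>)"
      using zak_Pi_sigma[of \<gamma> \<psi>]
    proof eventually_elim
      case (elim x)
      have "(\<lambda>g. max 0 (J (-g) x) *\<^sub>R f (\<sigma> (-g) x))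
          = (\<lambda>g. zak \<sigma> J \<phi> x g * cnj (zak \<sigma> J \<psi> x (g + \<gamma>)))"
        by (intro ext pointwise elim(2,3))
      then show ?case
        using integral_count_space_eq_infsum[OF elim(1)] by (simp only: nc_adj_mult_uminus)
    qed
  qed
  finally show ?thesis .
qed

end

theorem proposition7p1:
  fixes M :: "'x measure" and \<sigma> :: "'g::{group_add,countable} \<Rightarrow> 'x \<Rightarrow> 'x"
    and J :: "'g \<Rightarrow> 'x \<Rightarrow> real" and C :: "'x set"
  assumes "sigma_finite_measure M"
    and "quasi_invariant_action M \<sigma> J"
    and "tiling_set M \<sigma> C"
  shows "helson_map M (Pi_sigma \<sigma> J) (restrict_space M C) (zak \<sigma> J)
    \<and> (\<forall>F. L2_vec (restrict_space M C) F \<longrightarrow>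
          (\<exists>\<phi>. L2_fun M \<phi> \<and> (AE x in restrict_space M C. zak \<sigma> J \<phi> x = F x)))
    \<and> is_bracket_map M (Pi_sigma \<sigma> J)
        (\<lambda>\<phi> \<psi> \<alpha>. \<integral>x. nc_adj_mult (zak \<sigma> J \<psi> x) (zak \<sigma> J \<phi> x) \<alpha> \<partial>(restrict_space M C))"
proof -
  interpret tiled_quasi_invariant_action M \<sigma> J C
    by (intro tiled_quasi_invariant_action.intro tiled_quasi_invariant_action_axioms.intro assms)
  show ?thesis
    using helson_map_zak zak_surjective L2_inner_Pi_sigma_zak
    unfolding is_bracket_map_def tau_rho_def by blast
qed

end
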